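(* Let $X_{\Omega_-}$ and $X_{\Omega_+}$ be convex toric domains in $\mathbb{R}^4$. Suppose that for every pair of relatively prime positive integers $a,b>0$ we have $\|(a,b)\|^*_{\Omega_-}\le\|(a,b)\|^*_{\Omega_+}$. Then $\Omega_-\subset\Omega_+$.
   Context: Let $\mu:\mathbb{C}^2\to\mathbb{R}^2_{\ge0}$, $\mu(z_1,z_2)=(\pi|z_1|^2,\pi|z_2|^2)$. Let $\Omega\subset\mathbb{R}^2_{\ge0}$ be compact with $0\in\operatorname{int}(\Omega)$, whose boundary consists of the segment from $(0,0)$ to $(a(\Omega),0)$, the segment from $(0,0)$ to $(0,b(\Omega))$ (with $a(\Omega),b(\Omega)>0$), and a continuous curve $\partial_+\Omega$ from $(a(\Omega),0)$ to $(0,b(\Omega))$ meeting the axes only at its endpoints. $X_\Omega=\mu^{-1}(\Omega)$ is a convex toric domain if $\{\mu\in\mathbb{R}^2:(|\mu_1|,|\mu_2|)\in\Omega\}$ is convex. For $(a,b)\in\mathbb{Z}^2_{\ge0}$, $\|(a,b)\|^*_\Omega=\max\{ax+by:(x,y)\in\Omega\}$ (in the paper this quantity is the $\Omega$-action $\mathcal{A}_\Omega(e_{a,b})$). *)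

theory Defs
  imports "HOL-Analysis.Analysis"
begin

definition quadrant :: "(real \<times> real) set" where
  "quadrant = {p. fst p \<ge> 0 \<and> snd p \<ge> 0}"

definition toric_region :: "(real \<times> real) set \<Rightarrow> bool" where
  "toric_region \<Omega> \<longleftrightarrow>
     compact \<Omega> \<and> \<Omega> \<subseteq> quadrant \<and>
     (\<exists>e>0. ball (0,0) e \<inter> quadrant \<subseteq> \<Omega>) \<and>
     (\<exists>a b (\<gamma>::real \<Rightarrow> real \<times> real). a > 0 \<and> b > 0 \<and>
        continuous_on {0..1} \<gamma> \<and> \<gamma> 0 = (a, 0) \<and> \<gamma> 1 = (0, b) \<and>
        (\<forall>t\<in>{0<..<1}. fst (\<gamma> t) > 0 \<and> snd (\<gamma> t) > 0) \<and>
        frontier \<Omega> = closed_segment (0,0) (a,0) \<union> closed_segment (0,0) (0,b) \<union> \<gamma> ` {0..1})"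

text \<open>X_\<Omega> is a convex toric domain: the symmetrization of \<Omega> is convex.\<close>

definition convex_toric_domain :: "(real \<times> real) set \<Rightarrow> bool" where
  "convex_toric_domain \<Omega> \<longleftrightarrow>
     toric_region \<Omega> \<and> convex {\<mu> :: real \<times> real. (\<bar>fst \<mu>\<bar>, \<bar>snd \<mu>\<bar>) \<in> \<Omega>}"

definition omega_norm :: "(real \<times> real) set \<Rightarrow> nat \<Rightarrow> nat \<Rightarrow> real" where
  "omega_norm \<Omega> a b = (SUP p\<in>\<Omega>. real a * fst p + real b * snd p)"

end

theory Submission
  imports Defs
begin

text \<open>If some p \<in> \<Omega>m were missing from \<Omega>p, a line would separate p from the convex
  symmetrization of \<Omega>p. Reflecting \<Omega>p into the other quadrants shows that the separating
  functional can be taken with nonnegative coefficients; scaling it up and rounding the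
  coefficients up to integers keeps it separating because \<Omega>p is bounded, and dividing by
  their gcd makes them coprime. For these coefficients (a,b) the action of p, and hence the
  \<Omega>m-norm, exceeds the \<Omega>p-norm.\<close>

lemma convex_toric_domainD:
  assumes "convex_toric_domain \<Omega>"
  shows "compact \<Omega>" "\<Omega> \<subseteq> quadrant" "(0, 0) \<in> \<Omega>"
    and "convex {\<mu> :: real \<times> real. (\<bar>fst \<mu>\<bar>, \<bar>snd \<mu>\<bar>) \<in> \<Omega>}"
proof -
  obtain e where "e > 0" "ball (0, 0) e \<inter> quadrant \<subseteq> \<Omega>"
    using assms unfolding convex_toric_domain_def toric_region_def by blast
  then show "(0, 0) \<in> \<Omega>"
    by (auto simp: quadrant_def)
qed (use assms in \<open>auto simp: convex_toric_domain_def toric_region_def\<close>)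

lemma omega_norm_eq_SUP_inner: "omega_norm \<Omega> a b = (SUP q\<in>\<Omega>. inner (real a, real b) q)"
  by (simp add: omega_norm_def inner_prod_def)

lemma omega_norm_le:
  assumes "\<Omega> \<noteq> {}" "\<forall>q\<in>\<Omega>. inner (real a, real b) q \<le> K"
  shows "omega_norm \<Omega> a b \<le> K"
  unfolding omega_norm_eq_SUP_inner using assms by (intro cSUP_least) auto

lemma inner_le_omega_norm:
  assumes "bounded \<Omega>" "p \<in> \<Omega>"
  shows "inner (real a, real b) p \<le> omega_norm \<Omega> a b"
proof -
  have "bdd_above (inner (real a, real b) ` \<Omega>)"
    using assms(1) by (intro bounded_imp_bdd_above bounded_linear_image bounded_linear_inner_right)
  then show ?thesis
    unfolding omega_norm_eq_SUP_inner using assms(2) by (intro cSUP_upper)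
qed

lemma quadrant_separating_direction:
  fixes \<Omega> :: "(real \<times> real) set"
  assumes "closed \<Omega>" "\<Omega> \<subseteq> quadrant"
    and "convex {\<mu>. (\<bar>fst \<mu>\<bar>, \<bar>snd \<mu>\<bar>) \<in> \<Omega>}"
    and "p \<in> quadrant" "p \<notin> \<Omega>"
  obtains w \<beta> where "w \<in> quadrant" "\<forall>q\<in>\<Omega>. inner w q \<le> \<beta>" "\<beta> < inner w p"
proof -
  let ?fold = "\<lambda>\<mu>::real \<times> real. (\<bar>fst \<mu>\<bar>, \<bar>snd \<mu>\<bar>)"
  have "closed (?fold -` \<Omega>)"
    using assms(1) by (intro continuous_closed_vimage) (auto intro!: continuous_intros)
  moreover have "p \<notin> ?fold -` \<Omega>"
    using assms(4,5) by (cases p) (auto simp: quadrant_def)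
  ultimately obtain c \<gamma> where c: "inner c p < \<gamma>" "\<forall>x \<in> ?fold -` \<Omega>. \<gamma> < inner c x"
    using separating_hyperplane_closed_point[of "?fold -` \<Omega>" p] assms(3)
    by (auto simp: vimage_def)
  define w where "w = (\<bar>fst c\<bar>, \<bar>snd c\<bar>)"
  have "inner w q \<le> - \<gamma>" if "q \<in> \<Omega>" for q
  proof -
    define r where "r = (if fst c \<ge> 0 then - fst q else fst q, if snd c \<ge> 0 then - snd q else snd q)"
    have "?fold r = q"
      using that assms(2) by (cases q) (auto simp: r_def quadrant_def)
    then have "\<gamma> < inner c r"
      using c(2) that by auto
    moreover have "inner c r = - inner w q"
      by (auto simp: r_def w_def inner_prod_def)
    ultimately show ?thesis by linarith
  qed
  moreover have "- inner w p \<le> inner c p"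
  proof -
    have "- (\<bar>x\<bar> * y) \<le> x * y" if "0 \<le> y" for x y :: real
      using that by (metis abs_ge_minus_self abs_mult abs_of_nonneg minus_le_iff)
    then have "- (\<bar>fst c\<bar> * fst p) \<le> fst c * fst p" "- (\<bar>snd c\<bar> * snd p) \<le> snd c * snd p"
      using assms(4) by (simp_all add: quadrant_def)
    then show ?thesis
      by (simp add: w_def inner_prod_def)
  qed
  ultimately show thesis
    using c(1) by (intro that[of w "- \<gamma>"]) (auto simp: w_def quadrant_def)
qed

lemma integer_separating_direction:
  fixes \<Omega> :: "(real \<times> real) set"
  assumes "bounded \<Omega>" "\<Omega> \<subseteq> quadrant" "p \<in> quadrant" "w \<in> quadrant"
    and "\<forall>q\<in>\<Omega>. inner w q \<le> \<beta>" "\<beta> < inner w p"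
  obtains a b :: nat and K where "a > 0" "b > 0"
    "\<forall>q\<in>\<Omega>. inner (real a, real b) q \<le> K" "K < inner (real a, real b) p"
proof -
  obtain B where B: "\<forall>q\<in>\<Omega>. norm q \<le> B"
    using assms(1) by (auto simp: bounded_iff)
  have sum_le: "fst q + snd q \<le> 2 * B" if "q \<in> \<Omega>" for q
    using B that norm_fst_le[of "fst q" "snd q"] norm_snd_le[of "snd q" "fst q"] by force
  obtain N :: nat where N: "2 * B / (inner w p - \<beta>) < N"
    using reals_Archimedean2 by blast
  have gap: "2 * B < N * (inner w p - \<beta>)"
    using N assms(6) by (simp add: field_simps)
  define a where "a = nat \<lfloor>N * fst w\<rfloor> + 1"
  define b where "b = nat \<lfloor>N * snd w\<rfloor> + 1"
  have a: "N * fst w \<le> a" "a \<le> N * fst w + 1" and b: "N * snd w \<le> b" "b \<le> N * snd w + 1"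
    using assms(4) unfolding a_def b_def quadrant_def by (auto simp: of_nat_nat) linarith+
  \<comment> \<open>the rounding error is at most fst q + snd q, which is bounded on \<Omega>\<close>
  have "inner (real a, real b) q \<le> N * \<beta> + 2 * B" if "q \<in> \<Omega>" for q
  proof -
    have q: "0 \<le> fst q" "0 \<le> snd q"
      using that assms(2) by (auto simp: quadrant_def)
    have "inner (real a, real b) q \<le> (N * fst w + 1) * fst q + (N * snd w + 1) * snd q"
      using a(2) b(2) q by (auto simp: inner_prod_def intro!: add_mono mult_right_mono)
    also have "\<dots> = N * inner w q + (fst q + snd q)"
      by (simp add: inner_prod_def algebra_simps)
    also have "\<dots> \<le> N * \<beta> + 2 * B"
      using that assms(5) sum_le by (intro add_mono mult_left_mono) auto
    finally show ?thesis .
  qed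
  moreover have "N * \<beta> + 2 * B < inner (real a, real b) p"
  proof -
    have p: "0 \<le> fst p" "0 \<le> snd p"
      using assms(3) by (auto simp: quadrant_def)
    have "N * \<beta> + 2 * B < N * inner w p"
      using gap by (simp add: algebra_simps)
    also have "\<dots> = (N * fst w) * fst p + (N * snd w) * snd p"
      by (simp add: inner_prod_def algebra_simps)
    also have "\<dots> \<le> inner (real a, real b) p"
      using a(1) b(1) p by (simp add: inner_prod_def add_mono mult_right_mono)
    finally show ?thesis .
  qed
  moreover have "a > 0" "b > 0"
    by (simp_all add: a_def b_def)
  ultimately show thesis
    using that by blast
qed

lemma coprime_separating_direction:
  fixes a b :: nat
  assumes "a > 0" "b > 0"
    and "\<forall>q\<in>\<Omega>. inner (real a, real b) q \<le> K" "K < inner (real a, real b) p"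
  obtains a' b' :: nat and K' where "a' > 0" "b' > 0" "coprime a' b'"
    "\<forall>q\<in>\<Omega>. inner (real a', real b') q \<le> K'" "K' < inner (real a', real b') p"
proof -
  define d where "d = gcd a b"
  have "d > 0"
    using assms(1) by (simp add: d_def)
  have scale: "inner (real a, real b) q = d * inner (real (a div d), real (b div d)) q" for q
  proof -
    have "real a = d * real (a div d)" "real b = d * real (b div d)"
      by (simp_all add: d_def flip: of_nat_mult)
    then show ?thesis
      by (simp add: inner_prod_def algebra_simps)
  qed
  show thesis
  proof (rule that[of "a div d" "b div d" "K / d"])
    show "a div d > 0" "b div d > 0"
      using assms(1,2) by (simp_all add: d_def div_greater_zero_iff)
    show "coprime (a div d) (b div d)"
      using assms(1) unfolding d_def by (intro div_gcd_coprime) simp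
    show "\<forall>q\<in>\<Omega>. inner (real (a div d), real (b div d)) q \<le> K / d"
      using assms(3) \<open>d > 0\<close> by (simp add: scale pos_le_divide_eq mult.commute)
    show "K / d < inner (real (a div d), real (b div d)) p"
      using assms(4) \<open>d > 0\<close> by (simp add: scale pos_divide_less_eq mult.commute)
  qed
qed

theorem lemma3p5:
  fixes \<Omega>m \<Omega>p :: "(real \<times> real) set"
  assumes "convex_toric_domain \<Omega>m" and "convex_toric_domain \<Omega>p"
    and "\<And>a b :: nat. a > 0 \<Longrightarrow> b > 0 \<Longrightarrow> coprime a b \<Longrightarrow>
           omega_norm \<Omega>m a b \<le> omega_norm \<Omega>p a b"
  shows "\<Omega>m \<subseteq> \<Omega>p"
proof
  fix p assume "p \<in> \<Omega>m"
  note facts_m = convex_toric_domainD[OF assms(1)]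
    and facts_p = convex_toric_domainD[OF assms(2)]
  have "p \<in> quadrant"
    using \<open>p \<in> \<Omega>m\<close> facts_m(2) by blast
  show "p \<in> \<Omega>p"
  proof (rule ccontr)
    assume "p \<notin> \<Omega>p"
    obtain w \<beta> where "w \<in> quadrant" "\<forall>q\<in>\<Omega>p. inner w q \<le> \<beta>" "\<beta> < inner w p"
      using quadrant_separating_direction[OF compact_imp_closed facts_p(2,4)] facts_p(1)
        \<open>p \<in> quadrant\<close> \<open>p \<notin> \<Omega>p\<close> by blast
    then obtain a0 b0 :: nat and K0 where "a0 > 0" "b0 > 0"
      "\<forall>q\<in>\<Omega>p. inner (real a0, real b0) q \<le> K0" "K0 < inner (real a0, real b0) p"
      using integer_separating_direction[OF compact_imp_bounded[OF facts_p(1)] facts_p(2)]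
        \<open>p \<in> quadrant\<close> by blast
    then obtain a b K where ab: "a > 0" "b > 0" "coprime a b"
      and K: "\<forall>q\<in>\<Omega>p. inner (real a, real b) q \<le> K" "K < inner (real a, real b) p"
      by (rule coprime_separating_direction)
    have "omega_norm \<Omega>p a b \<le> K"
      using facts_p(3) K(1) by (intro omega_norm_le) auto
    also have "K < inner (real a, real b) p"
      by (fact K(2))
    also have "\<dots> \<le> omega_norm \<Omega>m a b"
      using compact_imp_bounded[OF facts_m(1)] \<open>p \<in> \<Omega>m\<close> by (rule inner_le_omega_norm)
    finally show False
      using assms(3)[OF ab] by linarith
  qed
qed

end
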